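(* Let $A$, $\phi$, $A_\lambda$, $\mu_\lambda$, $\mu=\mu_0$ be as in the context, let $0\le\alpha\le1$, let $\nu$ be a $\sigma$-finite Borel measure on $\mathbb{R}$ that is uniformly $\alpha$-Hölder continuous, and let $\kappa(B)=\int\mu_\lambda(B)\,\mathrm{d}\nu(\lambda)$. Then there is a constant $C_\alpha$ such that for all $z\in\mathbb{H}^+$, $$P_\kappa(z)\le C_\alpha\left(\frac{|F_\mu(z)|^2}{P_\mu(z)}\right)^{1-\alpha}.$$ In particular $\int\frac{1}{1+x^2}\,\mathrm{d}\kappa(x)<\infty$, so $\kappa$ is finite on compact sets.
   Context: $A$ is a bounded self-adjoint operator on a separable Hilbert space $\mathcal{H}$, $\phi\in\mathcal{H}$ with $\|\phi\|=1$, $A_\lambda:=A+\lambda\langle\phi,\cdot\rangle\phi$, $\mu_\lambda$ is the spectral measure of $A_\lambda$ with respect to $\phi$, and $\mu:=\mu_0$. For a Borel measure $\eta$ and $z=x+i\epsilon\in\mathbb{H}^+$: $F_\eta(z)=\int\frac{\mathrm{d}\eta(y)}{y-z}$ and $P_\eta(x+i\epsilon)=\int\frac{\epsilon}{(y-x)^2+\epsilon^2}\,\mathrm{d}\eta(y)$. A $\sigma$-finite Borel measure $\eta$ is uniformly $\alpha$-Hölder continuous (U$\alpha$H) if there is a constant $K$ with $\eta(I)\le K|I|^\alpha$ for every interval $I$. *)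

theory Defs
  imports "HOL-Analysis.Analysis"
begin

definition bounded_selfadjoint :: "('a::real_inner \<Rightarrow> 'a) \<Rightarrow> bool" where
  "bounded_selfadjoint T \<longleftrightarrow> bounded_linear T \<and> (\<forall>x y. inner (T x) y = inner x (T y))"

definition rank_one_pert :: "('a::real_inner \<Rightarrow> 'a) \<Rightarrow> 'a \<Rightarrow> real \<Rightarrow> 'a \<Rightarrow> 'a" where
  "rank_one_pert T v l x = T x + (l * inner v x) *\<^sub>R v"

text \<open>Spectral measure of T with respect to v: the (unique, compactly supported) finite
  Borel measure m with  <v, T^n v> = integral of x^n dm  for all n.\<close>
definition spectral_measure :: "('a::real_inner \<Rightarrow> 'a) \<Rightarrow> 'a \<Rightarrow> real measure \<Rightarrow> bool" where
  "spectral_measure T v m \<longleftrightarrow> sets m = sets borel \<and> finite_measure m \<and>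
     (\<forall>n::nat. integrable m (\<lambda>x. x ^ n) \<and> (\<integral>x. x ^ n \<partial>m) = inner v ((T ^^ n) v))"

definition borel_transform :: "real measure \<Rightarrow> complex \<Rightarrow> complex" where
  "borel_transform eta z = (\<integral>y. 1 / (complex_of_real y - z) \<partial>eta)"

definition poisson_transform :: "real measure \<Rightarrow> complex \<Rightarrow> ennreal" where
  "poisson_transform eta z =
     (\<integral>\<^sup>+y. ennreal (Im z / ((y - Re z)\<^sup>2 + (Im z)\<^sup>2)) \<partial>eta)"

text \<open>Uniformly alpha-Hoelder continuous measure: eta(I) <= K |I|^alpha for all intervals I
  (it suffices to take closed intervals of positive length).\<close>
definition unif_hoelder :: "real \<Rightarrow> real measure \<Rightarrow> bool" where
  "unif_hoelder \<alpha> eta \<longleftrightarrow>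
     (\<exists>K. \<forall>a b. a < b \<longrightarrow> emeasure eta {a..b} \<le> ennreal (K * (b - a) powr \<alpha>))"

definition average_measure :: "(real \<Rightarrow> real measure) \<Rightarrow> real measure \<Rightarrow> real measure" where
  "average_measure mu nu =
     measure_of UNIV (sets borel) (\<lambda>B. \<integral>\<^sup>+l. emeasure (mu l) B \<partial>nu)"

end

theory Submission
  imports Defs "HOL-Probability.Probability" "HOL-Complex_Analysis.Complex_Analysis"
begin

text \<open>
  By the Aronszajn-Krein formula \<open>F\<^sub>\<mu>\<^sub>\<lambda> = F/(1 + \<lambda>F)\<close>, where \<open>F = F\<^sub>\<mu>(z)\<close>, the value
  \<open>P\<^sub>\<mu>\<^sub>\<lambda>(z) = Im F\<^sub>\<mu>\<^sub>\<lambda>(z)\<close> is, as a function of the coupling \<open>\<lambda>\<close>, the Poisson kernel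
  \<open>h/((\<lambda> - c)\<^sup>2 + h\<^sup>2)\<close> with \<open>h = Im F/\<bar>F\<bar>\<^sup>2\<close> and \<open>c = -Re F/\<bar>F\<bar>\<^sup>2\<close>. Hence
  \<open>P\<^sub>\<kappa>(z) = \<integral> h/((\<lambda> - c)\<^sup>2 + h\<^sup>2) d\<nu>(\<lambda>)\<close>, and cutting this kernel into dyadic shells
  around \<open>c\<close> the Hoelder bound \<open>\<nu>(I) \<le> K\<bar>I\<bar>\<^sup>\<alpha>\<close> gives \<open>P\<^sub>\<kappa>(z) \<le> 16K h\<^sup>\<alpha>\<^sup>-\<^sup>1\<close>, which is the claim.

  The Aronszajn-Krein formula is first proved for large \<open>\<bar>z\<bar>\<close>, where both Borel transforms
  expand in the moments \<open>\<langle>\<phi>, A\<^sub>\<lambda>\<^sup>n\<phi>\<rangle>\<close> and these satisfy a convolution recursion in \<open>n\<close>;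
  analytic continuation extends it to the half-plane. The moments are continuous in \<open>\<lambda>\<close>, which
  by Weierstrass approximation makes \<open>\<lambda> \<mapsto> \<mu>\<^sub>\<lambda>\<close> a measurable kernel, so that \<open>\<kappa>\<close> is
  the corresponding Giry-monad average and Fubini applies.
\<close>

section \<open>The Poisson kernel and Hoelder continuous measures\<close>

definition poisson_kernel :: "real \<Rightarrow> real \<Rightarrow> real \<Rightarrow> real" where
  "poisson_kernel h c y = h / ((y - c)\<^sup>2 + h\<^sup>2)"

lemma poisson_transform_eq_nn_integral_kernel:
  "poisson_transform eta z = (\<integral>\<^sup>+y. ennreal (poisson_kernel (Im z) (Re z) y) \<partial>eta)"
  by (simp add: poisson_transform_def poisson_kernel_def)

lemma borel_measurable_poisson_kernel [measurable]: "poisson_kernel h c \<in> borel_measurable borel"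
  unfolding poisson_kernel_def by measurable

lemma poisson_kernel_nonneg: "0 \<le> h \<Longrightarrow> 0 \<le> poisson_kernel h c y"
  by (simp add: poisson_kernel_def)

lemma poisson_kernel_pos: "0 < h \<Longrightarrow> 0 < poisson_kernel h c y"
  by (simp add: poisson_kernel_def add_nonneg_pos)

lemma poisson_kernel_le_inverse:
  assumes "0 < h"
  shows "poisson_kernel h c y \<le> 1 / h"
proof -
  have "h / ((y - c)\<^sup>2 + h\<^sup>2) \<le> h / h\<^sup>2"
    using assms by (intro divide_left_mono) (auto intro!: mult_pos_pos add_nonneg_pos)
  then show ?thesis
    using assms by (simp add: poisson_kernel_def power2_eq_square)
qed

lemma poisson_kernel_le_far:
  assumes "0 < h" and "r \<le> \<bar>y - c\<bar>" and "0 \<le> r"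
  shows "poisson_kernel h c y \<le> h / (r\<^sup>2 + h\<^sup>2)"
proof -
  have "r\<^sup>2 \<le> (y - c)\<^sup>2"
    using assms(2,3) by (metis abs_le_square_iff abs_of_nonneg)
  then show ?thesis
    unfolding poisson_kernel_def using assms(1)
    by (intro divide_left_mono) (auto intro!: mult_pos_pos add_nonneg_pos)
qed

lemma poisson_kernel_le_dyadic:
  assumes h: "0 < h"
  shows "\<exists>k::nat. \<bar>y - c\<bar> \<le> 2 ^ k * h \<and> poisson_kernel h c y \<le> 4 / (4 ^ k * h)"
proof -
  obtain n :: nat where "\<bar>y - c\<bar> / h < 2 ^ n"
    using real_arch_pow[of 2] by auto
  then have ex: "\<exists>k::nat. \<bar>y - c\<bar> \<le> 2 ^ k * h"
    using h by (auto simp: divide_less_eq intro!: exI[of _ n])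
  define k where "k = (LEAST k::nat. \<bar>y - c\<bar> \<le> 2 ^ k * h)"
  have k: "\<bar>y - c\<bar> \<le> 2 ^ k * h"
    unfolding k_def using ex by (rule LeastI_ex)
  have "poisson_kernel h c y \<le> 4 / (4 ^ k * h)"
  proof (cases k)
    case 0
    then show ?thesis
      using poisson_kernel_le_inverse[OF h, of c y] h by (simp add: divide_right_mono order_trans)
  next
    case (Suc j)
    then have "2 ^ j * h < \<bar>y - c\<bar>"
      using not_less_Least[of j "\<lambda>k. \<bar>y - c\<bar> \<le> 2 ^ k * h"] by (simp add: k_def)
    then have "poisson_kernel h c y \<le> h / ((2 ^ j * h)\<^sup>2 + h\<^sup>2)"
      using h by (intro poisson_kernel_le_far) auto
    also have "\<dots> \<le> h / ((2 ^ j * h)\<^sup>2)"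
      using h by (intro divide_left_mono) (auto intro!: mult_pos_pos add_nonneg_pos)
    also have "\<dots> = 4 / (4 ^ k * h)"
      using h Suc by (simp add: power2_eq_square power_mult_distrib[symmetric] field_simps)
    finally show ?thesis .
  qed
  with k show ?thesis by blast
qed

lemma ennreal_poisson_kernel_le_dyadic_sum:
  assumes "0 < h"
  shows "ennreal (poisson_kernel h c y)
    \<le> (\<Sum>k. ennreal (4 / (4 ^ k * h)) * indicator {c - 2 ^ k * h .. c + 2 ^ k * h} y)"
    (is "_ \<le> suminf ?f")
proof -
  obtain k where k: "\<bar>y - c\<bar> \<le> 2 ^ k * h" "poisson_kernel h c y \<le> 4 / (4 ^ k * h)"
    using poisson_kernel_le_dyadic[OF assms] by blast
  then have "ennreal (poisson_kernel h c y) \<le> ?f k"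
    by (auto simp: abs_le_iff intro: ennreal_leI)
  also have "?f k \<le> suminf ?f"
    using sum_le_suminf[OF summableI, of "{k}" ?f] by (simp del: sum_mult_indicator)
  finally show ?thesis .
qed

lemma dyadic_hoelder_term_le:
  fixes K \<alpha> h :: real
  assumes K: "0 \<le> K" and \<alpha>: "\<alpha> \<le> 1" and h: "0 < h"
  shows "4 / (4 ^ k * h) * (K * (2 ^ Suc k * h) powr \<alpha>) \<le> 8 * K * h powr (\<alpha> - 1) * (1 / 2) ^ k"
proof -
  have "(1::real) \<le> 2 ^ Suc k"
    by (rule one_le_power) simp
  then have "(2 ^ Suc k :: real) powr \<alpha> \<le> 2 ^ Suc k"
    using powr_mono[OF \<alpha>] by fastforce
  then have "(2 ^ Suc k * h) powr \<alpha> \<le> 2 ^ Suc k * h powr \<alpha>"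
    using h by (simp add: powr_mult mult_right_mono)
  then have "4 / (4 ^ k * h) * (K * (2 ^ Suc k * h) powr \<alpha>)
      \<le> 4 / (4 ^ k * h) * (K * (2 ^ Suc k * h powr \<alpha>))"
    using K h by (intro mult_left_mono) auto
  also have "\<dots> = 8 * K * (h powr \<alpha> / h) * (1 / 2) ^ k"
    using h by (simp add: field_simps power_mult_distrib[symmetric])
  also have "h powr \<alpha> / h = h powr (\<alpha> - 1)"
    using h by (simp add: powr_diff)
  finally show ?thesis .
qed

text \<open>The Poisson kernel is dominated by a dyadic staircase; the Hoelder bound on the
  \<open>k\<close>-th step decays like \<open>2\<^sup>-\<^sup>k\<close> because \<open>\<alpha> \<le> 1\<close>.\<close>
lemma nn_integral_poisson_kernel_le_hoelder:
  fixes nu :: "real measure"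
  assumes sets_nu: "sets nu = sets borel" and K: "0 \<le> K" and \<alpha>: "\<alpha> \<le> 1"
    and hoelder: "\<And>a b. a < b \<Longrightarrow> emeasure nu {a..b} \<le> ennreal (K * (b - a) powr \<alpha>)"
    and h: "0 < h"
  shows "(\<integral>\<^sup>+y. ennreal (poisson_kernel h c y) \<partial>nu) \<le> ennreal (16 * K * h powr (\<alpha> - 1))"
proof -
  have [measurable_cong]: "sets nu = sets borel" by (rule sets_nu)
  define I where "I k = {c - 2 ^ k * h .. c + 2 ^ k * h}" for k :: nat
  define d where "d k = 4 / (4 ^ k * h)" for k :: nat
  have "(\<integral>\<^sup>+y. ennreal (poisson_kernel h c y) \<partial>nu) \<le> (\<integral>\<^sup>+y. (\<Sum>k. ennreal (d k) * indicator (I k) y) \<partial>nu)"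
    unfolding I_def d_def by (intro nn_integral_mono ennreal_poisson_kernel_le_dyadic_sum h)
  also have "\<dots> = (\<Sum>k. ennreal (d k) * emeasure nu (I k))"
    by (subst nn_integral_suminf) (auto simp: I_def intro!: suminf_cong nn_integral_cmult_indicator)
  also have "\<dots> \<le> (\<Sum>k. ennreal (8 * K * h powr (\<alpha> - 1) * (1 / 2) ^ k))"
  proof (intro suminf_le summableI)
    fix k
    have len: "(c + 2 ^ k * h) - (c - 2 ^ k * h) = 2 ^ Suc k * h"
      by simp
    have "emeasure nu (I k) \<le> ennreal (K * (2 ^ Suc k * h) powr \<alpha>)"
      using hoelder[of "c - 2 ^ k * h" "c + 2 ^ k * h"] h unfolding I_def len by simp
    then have "ennreal (d k) * emeasure nu (I k) \<le> ennreal (d k) * ennreal (K * (2 ^ Suc k * h) powr \<alpha>)"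
      by (rule mult_left_mono) simp
    also have "\<dots> = ennreal (d k * (K * (2 ^ Suc k * h) powr \<alpha>))"
      using K h by (intro ennreal_mult[symmetric]) (auto simp: d_def)
    also have "\<dots> \<le> ennreal (8 * K * h powr (\<alpha> - 1) * (1 / 2) ^ k)"
      unfolding d_def by (intro ennreal_leI dyadic_hoelder_term_le K \<alpha> h)
    finally show "ennreal (d k) * emeasure nu (I k) \<le> ennreal (8 * K * h powr (\<alpha> - 1) * (1 / 2) ^ k)" .
  qed
  also have "\<dots> = ennreal (\<Sum>k. 8 * K * h powr (\<alpha> - 1) * (1 / 2) ^ k)"
    using K by (intro suminf_ennreal2 summable_mult summable_geometric) auto
  also have "(\<Sum>k. 8 * K * h powr (\<alpha> - 1) * (1 / 2 :: real) ^ k) = 16 * K * h powr (\<alpha> - 1)"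
    by (subst suminf_mult) (auto simp: suminf_geometric)
  finally show ?thesis .
qed

lemma Im_divide_one_plus_mult:
  fixes F :: complex and l :: real
  assumes "0 < Im F"
  shows "Im (F / (1 + l * F)) = poisson_kernel (Im F / (cmod F)\<^sup>2) (- Re F / (cmod F)\<^sup>2) l"
proof -
  define s where "s = (cmod F)\<^sup>2"
  have s: "s = (Re F)\<^sup>2 + (Im F)\<^sup>2" "0 < s"
    using assms by (auto simp: s_def cmod_power2 add_nonneg_pos)
  have "s * ((l + Re F / s)\<^sup>2 + (Im F / s)\<^sup>2) = l\<^sup>2 * s + 2 * l * Re F + ((Re F)\<^sup>2 + (Im F)\<^sup>2) / s"
    using s(2) by (simp add: field_simps power2_eq_square)
  also have "\<dots> = l\<^sup>2 * s + 2 * l * Re F + 1"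
    using s(2) by (simp flip: s(1))
  also have "\<dots> = (1 + l * Re F)\<^sup>2 + (l * Im F)\<^sup>2"
    unfolding s(1) by (simp add: power2_eq_square algebra_simps)
  finally have denom: "(1 + l * Re F)\<^sup>2 + (l * Im F)\<^sup>2 = s * ((l + Re F / s)\<^sup>2 + (Im F / s)\<^sup>2)"
    by simp
  have "Im (F / (1 + l * F)) = Im F / ((1 + l * Re F)\<^sup>2 + (l * Im F)\<^sup>2)"
    by (simp add: Im_divide algebra_simps power2_eq_square)
  also have "\<dots> = poisson_kernel (Im F / s) (- Re F / s) l"
    using s by (simp add: denom poisson_kernel_def)
  finally show ?thesis by (simp add: s_def)
qed

section \<open>Borel transforms of finite measures\<close>

lemma Im_le_cmod_of_real_minus: "Im z \<le> cmod (of_real y - z)"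
  using abs_Im_le_cmod[of "of_real y - z"] by simp

lemma inverse_diff_remainder:
  fixes a b :: complex
  assumes "a \<noteq> 0" "b \<noteq> 0"
  shows "1 / a - 1 / b - (b - a) / b\<^sup>2 = (b - a)\<^sup>2 / (a * b\<^sup>2)"
  using assms by (simp add: field_simps power2_eq_square)

lemma norm_cauchy_kernel_remainder_le:
  assumes w: "0 < Im w" and zw: "cmod (z - w) < Im w / 2"
  shows "cmod (1 / (of_real y - z) - 1 / (of_real y - w) - (z - w) / (of_real y - w)\<^sup>2)
    \<le> 2 / (Im w)^3 * (cmod (z - w))\<^sup>2"
proof -
  define a b where "a = of_real y - z" and "b = of_real y - w"
  have "Im w - Im z \<le> cmod (z - w)"
    using abs_Im_le_cmod[of "z - w"] by simp
  then have a: "Im w / 2 \<le> cmod a"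
    using zw Im_le_cmod_of_real_minus[of z y] by (simp add: a_def)
  have b: "Im w \<le> cmod b"
    unfolding b_def by (rule Im_le_cmod_of_real_minus)
  have "a \<noteq> 0" "b \<noteq> 0"
    using a b w by auto
  have "z - w = b - a"
    by (simp add: a_def b_def)
  then have "cmod (1 / a - 1 / b - (z - w) / b\<^sup>2) = (cmod (z - w))\<^sup>2 / (cmod a * (cmod b)\<^sup>2)"
    using inverse_diff_remainder[OF \<open>a \<noteq> 0\<close> \<open>b \<noteq> 0\<close>] by (simp add: norm_divide norm_mult norm_power)
  also have "\<dots> \<le> (cmod (z - w))\<^sup>2 / (Im w / 2 * (Im w)\<^sup>2)"
    using a b w by (intro divide_left_mono mult_mono power_mono) (auto intro!: mult_pos_pos)
  also have "\<dots> = 2 / (Im w)^3 * (cmod (z - w))\<^sup>2"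
    by (simp add: power2_eq_square power3_eq_cube mult.commute mult.left_commute)
  finally show ?thesis
    by (simp add: a_def b_def)
qed

lemma (in finite_measure) norm_integral_le_const:
  fixes g :: "'a \<Rightarrow> 'b::{banach, second_countable_topology}"
  assumes "g \<in> borel_measurable M" and bound: "AE x in M. norm (g x) \<le> c"
  shows "norm (integral\<^sup>L M g) \<le> c * measure M (space M)"
proof -
  have "integrable M g"
    using bound assms(1) by (rule integrable_const_bound)
  then have "norm (integral\<^sup>L M g) \<le> (\<integral>x. c \<partial>M)"
    using bound by (intro order_trans[OF integral_norm_bound] integral_mono_AE) auto
  then show ?thesis
    by (simp add: mult.commute)
qed

context finite_borel_measure
begin

declare M_is_borel [measurable_cong]

lemma integrable_cauchy_kernel:
  assumes "0 < Im z"
  shows "integrable M (\<lambda>y. 1 / (of_real y - z))"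
proof (rule integrable_const_bound)
  show "AE y in M. norm (1 / (of_real y - z)) \<le> 1 / Im z"
    using Im_le_cmod_of_real_minus[of z] assms by (auto simp: norm_divide intro!: frac_le)
qed measurable

lemma integrable_poisson_kernel:
  assumes "0 < h"
  shows "integrable M (poisson_kernel h c)"
proof (rule integrable_const_bound)
  show "AE y in M. norm (poisson_kernel h c y) \<le> 1 / h"
    using assms by (auto simp: poisson_kernel_nonneg poisson_kernel_le_inverse)
qed (simp add: measurable_cong_sets[OF M_is_borel refl])

lemma Im_borel_transform:
  assumes "0 < Im z"
  shows "Im (borel_transform M z) = (\<integral>y. poisson_kernel (Im z) (Re z) y \<partial>M)"
proof -
  have "Im (borel_transform M z) = (\<integral>y. Im (1 / (of_real y - z)) \<partial>M)"
    unfolding borel_transform_def using integrable_cauchy_kernel[OF assms] by simp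
  also have "\<dots> = (\<integral>y. poisson_kernel (Im z) (Re z) y \<partial>M)"
    by (simp add: poisson_kernel_def Im_divide power2_eq_square algebra_simps)
  finally show ?thesis .
qed

lemma poisson_transform_eq_Im_borel_transform:
  assumes "0 < Im z"
  shows "poisson_transform M z = ennreal (Im (borel_transform M z))"
  unfolding poisson_transform_eq_nn_integral_kernel Im_borel_transform[OF assms]
  using assms by (intro nn_integral_eq_integral integrable_poisson_kernel) (auto simp: poisson_kernel_nonneg)

lemma integrable_cauchy_kernel_square:
  assumes "0 < Im w"
  shows "integrable M (\<lambda>y. 1 / (of_real y - w)\<^sup>2)"
proof (rule integrable_const_bound)
  show "AE y in M. norm (1 / (of_real y - w)\<^sup>2) \<le> 1 / (Im w)\<^sup>2"
    using Im_le_cmod_of_real_minus[of w] assms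
    by (auto simp: norm_divide norm_power intro!: frac_le power_mono)
qed measurable

lemma borel_transform_difference_quotient_le:
  assumes w: "0 < Im w" and "z \<noteq> w" and zw: "cmod (z - w) < Im w / 2"
  shows "cmod ((borel_transform M z - borel_transform M w) / (z - w) - (\<integral>y. 1 / (of_real y - w)\<^sup>2 \<partial>M))
    \<le> 2 * measure M (space M) / (Im w)^3 * cmod (z - w)"
proof -
  let ?D = "\<integral>y. 1 / (of_real y - w)\<^sup>2 \<partial>M"
  have "Im w - Im z \<le> cmod (z - w)"
    using abs_Im_le_cmod[of "z - w"] by simp
  then have z: "0 < Im z"
    using zw w by linarith
  have lin: "(\<integral>y. (z - w) / (of_real y - w)\<^sup>2 \<partial>M) = (z - w) * ?D"
    using integral_mult_right_zero[of M "z - w" "\<lambda>y. 1 / (of_real y - w)\<^sup>2"] by simp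
  have "integrable M (\<lambda>y. (z - w) / (of_real y - w)\<^sup>2)"
    using integrable_mult_right[OF integrable_cauchy_kernel_square[OF w], of "z - w"] by simp
  then have "borel_transform M z - borel_transform M w - (z - w) * ?D
      = (\<integral>y. 1 / (of_real y - z) - 1 / (of_real y - w) - (z - w) / (of_real y - w)\<^sup>2 \<partial>M)"
    using integrable_cauchy_kernel[OF z] integrable_cauchy_kernel[OF w]
    by (simp add: borel_transform_def Bochner_Integration.integral_diff lin[symmetric])
  also have "cmod \<dots> \<le> 2 / (Im w)^3 * (cmod (z - w))\<^sup>2 * measure M (space M)"
    using w zw by (intro norm_integral_le_const AE_I2 norm_cauchy_kernel_remainder_le) measurable
  finally have bound: "cmod (borel_transform M z - borel_transform M w - (z - w) * ?D)
      \<le> 2 / (Im w)^3 * (cmod (z - w))\<^sup>2 * measure M (space M)" .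
  have "(borel_transform M z - borel_transform M w) / (z - w) - ?D
      = (borel_transform M z - borel_transform M w - (z - w) * ?D) / (z - w)"
    using \<open>z \<noteq> w\<close> by (simp add: diff_divide_distrib)
  with bound \<open>z \<noteq> w\<close> show ?thesis
    by (simp add: norm_divide divide_le_eq power2_eq_square mult_ac)
qed

lemma has_field_derivative_borel_transform:
  assumes w: "0 < Im w"
  shows "(borel_transform M has_field_derivative (\<integral>y. 1 / (of_real y - w)\<^sup>2 \<partial>M)) (at w)"
proof -
  let ?D = "\<integral>y. 1 / (of_real y - w)\<^sup>2 \<partial>M"
  let ?C = "2 * measure M (space M) / (Im w)^3"
  have "((\<lambda>z. (borel_transform M z - borel_transform M w) / (z - w) - ?D) \<longlongrightarrow> 0) (at w)"
  proof (rule Lim_null_comparison)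
    show "\<forall>\<^sub>F z in at w. cmod ((borel_transform M z - borel_transform M w) / (z - w) - ?D)
        \<le> ?C * cmod (z - w)"
      unfolding eventually_at dist_norm using w borel_transform_difference_quotient_le[OF w]
      by (intro exI[of _ "Im w / 2"]) auto
    show "((\<lambda>z. ?C * cmod (z - w)) \<longlongrightarrow> 0) (at w)"
      by (intro tendsto_eq_intros) auto
  qed
  then show ?thesis
    unfolding has_field_derivative_iff LIM_zero_iff .
qed

lemma holomorphic_on_borel_transform: "borel_transform M holomorphic_on {z. 0 < Im z}"
  using has_field_derivative_borel_transform
  by (subst holomorphic_on_open) (auto simp: open_halfspace_Im_gt)

lemma AE_abs_le_of_even_moments_le:
  assumes int: "\<And>n. integrable M (\<lambda>y. y ^ n)"
    and moments: "\<And>n. (\<integral>y. y ^ (2 * n) \<partial>M) \<le> r ^ (2 * n)"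
    and r: "0 \<le> r" "r < R"
  shows "AE y in M. \<bar>y\<bar> \<le> R"
proof -
  let ?S = "{y \<in> space M. R < \<bar>y\<bar>}"
  have R: "0 < R"
    using r by linarith
  have S_le: "measure M ?S \<le> ((r / R)\<^sup>2) ^ n" for n
  proof -
    have "R ^ (2 * n) \<le> y ^ (2 * n)" if "R < \<bar>y\<bar>" for y
    proof -
      have "R ^ (2 * n) \<le> \<bar>y\<bar> ^ (2 * n)"
        using R that by (intro power_mono) auto
      then show ?thesis
        by (simp add: power_even_abs)
    qed
    then have "?S \<subseteq> {y \<in> space M. R ^ (2 * n) \<le> y ^ (2 * n)}"
      by auto
    then have "measure M ?S \<le> measure M {y \<in> space M. R ^ (2 * n) \<le> y ^ (2 * n)}"
      by (intro finite_measure_mono) measurable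
    also have "\<dots> \<le> (\<integral>y. y ^ (2 * n) \<partial>M) / R ^ (2 * n)"
      using R by (intro integral_Markov_inequality_measure[OF int sets.empty_sets]) (auto simp: power_mult)
    also have "\<dots> \<le> r ^ (2 * n) / R ^ (2 * n)"
      using R by (intro divide_right_mono moments) auto
    finally show ?thesis
      by (simp add: power_divide power_mult)
  qed
  have "(\<lambda>n. ((r / R)\<^sup>2) ^ n) \<longlonglongrightarrow> 0"
    using r by (intro LIMSEQ_power_zero) (auto simp: abs_square_less_1 divide_less_eq)
  then have "measure M ?S \<le> 0"
    using S_le by (intro LIMSEQ_le_const) auto
  then have "?S \<in> null_sets M"
    by (auto simp: emeasure_eq_measure measure_nonneg antisym)
  then show ?thesis
    by (rule AE_I') auto
qed

end

lemma (in real_distribution) Im_borel_transform_pos: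
  assumes z: "0 < Im z"
  shows "0 < Im (borel_transform M z)"
proof -
  have "(\<integral>y. poisson_kernel (Im z) (Re z) y \<partial>M) \<noteq> 0"
  proof
    assume "(\<integral>y. poisson_kernel (Im z) (Re z) y \<partial>M) = 0"
    then have "AE y in M. poisson_kernel (Im z) (Re z) y = 0"
      using z by (subst (asm) integral_nonneg_eq_0_iff_AE)
        (auto simp: integrable_poisson_kernel poisson_kernel_nonneg)
    then have "AE y in M. False"
      by eventually_elim (metis poisson_kernel_pos[OF z] less_irrefl)
    then show False
      by simp
  qed
  then show ?thesis
    using z by (simp add: Im_borel_transform integral_nonneg poisson_kernel_nonneg order_less_le)
qed

lemma suminf_eq_of_convolution_recursion:
  fixes a b :: "nat \<Rightarrow> 'a::{real_normed_algebra, banach}"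
  assumes a: "summable (\<lambda>n. norm (a n))" and b: "summable (\<lambda>n. norm (b n))"
    and rec: "\<And>n. a n = b n + t * (\<Sum>k<n. a k * b (n - 1 - k))"
  shows "suminf a = suminf b + t * (suminf a * suminf b)"
proof -
  define c where "c n = (\<Sum>k<n. a k * b (n - 1 - k))" for n
  have "(\<lambda>n. c (Suc n)) sums (suminf a * suminf b)"
    using Cauchy_product_sums[OF a b] by (simp add: c_def lessThan_Suc_atMost)
  then have "c sums (suminf a * suminf b + c 0)"
    by (rule iffD1[OF sums_Suc_iff])
  then have "c sums (suminf a * suminf b)"
    by (simp add: c_def)
  then have "(\<lambda>n. b n + t * c n) sums (suminf b + t * (suminf a * suminf b))"
    using summable_norm_cancel[OF b] by (intro sums_add summable_sums sums_mult)
  then show ?thesis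
    by (simp add: rec[folded c_def, symmetric] sums_iff)
qed

lemma cauchy_kernel_geometric_sums:
  assumes "\<bar>y\<bar> < cmod z"
  shows "(\<lambda>n. of_real y ^ n / z ^ Suc n) sums (1 / (z - of_real y))"
proof -
  have z: "z \<noteq> 0" and "cmod (of_real y / z) < 1"
    using assms by (auto simp: norm_divide divide_less_eq)
  then have "(\<lambda>n. (1 / z) * (of_real y / z) ^ n) sums ((1 / z) * (1 / (1 - of_real y / z)))"
    by (intro sums_mult geometric_sums)
  moreover have "z - of_real y \<noteq> 0"
    using assms by auto
  ultimately show ?thesis
    using z by (simp add: power_divide field_simps)
qed

lemma norm_cauchy_kernel_geometric_partial_sum_le:
  assumes y: "\<bar>y\<bar> \<le> R" and R: "0 \<le> R" "R < cmod z"
  shows "cmod (\<Sum>n<N. of_real y ^ n / z ^ Suc n) \<le> 1 / (cmod z - R)"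
proof -
  define q where "q = R / cmod z"
  have q: "0 \<le> q" "q < 1"
    using R by (auto simp: q_def divide_less_eq)
  have "cmod (\<Sum>n<N. of_real y ^ n / z ^ Suc n) \<le> (\<Sum>n<N. 1 / cmod z * q ^ n)"
  proof (intro order_trans[OF norm_sum] sum_mono)
    fix n
    have "\<bar>y\<bar> ^ n \<le> R ^ n"
      using y by (intro power_mono) auto
    then have "\<bar>y\<bar> ^ n / cmod z ^ Suc n \<le> R ^ n / cmod z ^ Suc n"
      by (intro divide_right_mono) auto
    then show "cmod (of_real y ^ n / z ^ Suc n) \<le> 1 / cmod z * q ^ n"
      by (simp add: norm_divide norm_power norm_mult q_def power_divide)
  qed
  also have "\<dots> \<le> (\<Sum>n. 1 / cmod z * q ^ n)"
    using q by (intro sum_le_suminf summable_mult summable_geometric) auto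
  also have "\<dots> = 1 / cmod z * (1 / (1 - q))"
    using q by (subst suminf_mult) (auto simp: suminf_geometric)
  also have "\<dots> = 1 / (cmod z - R)"
    using R by (auto simp: q_def field_simps)
  finally show ?thesis .
qed

lemma (in finite_measure) integral_tendsto_of_AE_uniform:
  fixes f :: "'a \<Rightarrow> 'b::{banach, second_countable_topology}"
  assumes g: "\<And>j. integrable M (g j)" and f: "integrable M f"
    and close: "\<forall>\<^sub>F j in sequentially. AE x in M. norm (g j x - f x) \<le> e j"
    and e: "e \<longlonglongrightarrow> 0"
  shows "(\<lambda>j. integral\<^sup>L M (g j)) \<longlonglongrightarrow> integral\<^sup>L M f"
proof -
  have "(\<lambda>j. integral\<^sup>L M (g j) - integral\<^sup>L M f) \<longlonglongrightarrow> 0"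
  proof (rule Lim_null_comparison)
    show "\<forall>\<^sub>F j in sequentially. norm (integral\<^sup>L M (g j) - integral\<^sup>L M f) \<le> e j * measure M (space M)"
      using close
    proof eventually_elim
      case (elim j)
      have "integral\<^sup>L M (g j) - integral\<^sup>L M f = (\<integral>x. g j x - f x \<partial>M)"
        using g f by simp
      also have "norm \<dots> \<le> e j * measure M (space M)"
        using g f elim by (intro norm_integral_le_const) auto
      finally show ?case .
    qed
    show "(\<lambda>j. e j * measure M (space M)) \<longlonglongrightarrow> 0"
      using e by (rule tendsto_mult_left_zero)
  qed
  then show ?thesis
    by (simp add: LIM_zero_iff)
qed

lemma polynomial_approximations:
  fixes f :: "real \<Rightarrow> real" and r :: "nat \<Rightarrow> real"
  assumes f: "continuous_on UNIV f"
  obtains P where "\<And>j. real_polynomial_function (P j)"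
    and "\<And>j x. \<bar>x\<bar> \<le> r j \<Longrightarrow> \<bar>f x - P j x\<bar> < 1 / real (Suc j)"
proof -
  have "\<exists>p. real_polynomial_function p \<and> (\<forall>x. \<bar>x\<bar> \<le> r j \<longrightarrow> \<bar>f x - p x\<bar> < 1 / real (Suc j))" for j
  proof -
    obtain p where "real_polynomial_function p" "\<And>x. x \<in> {- r j .. r j} \<Longrightarrow> \<bar>f x - p x\<bar> < 1 / real (Suc j)"
      using Stone_Weierstrass_real_polynomial_function[of "{- r j .. r j}" f "1 / real (Suc j)"]
        continuous_on_subset[OF f] by auto
    then show ?thesis
      by (auto simp: abs_le_iff)
  qed
  then obtain P where "\<And>j. real_polynomial_function (P j)
      \<and> (\<forall>x. \<bar>x\<bar> \<le> r j \<longrightarrow> \<bar>f x - P j x\<bar> < 1 / real (Suc j))"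
    by metis
  then show ?thesis
    using that by blast
qed

lemma ramp_tendsto_indicator_atMost:
  "(\<lambda>k. max 0 (min 1 (1 - real (Suc k) * (y - a)))) \<longlonglongrightarrow> indicator {..a} y"
proof (cases "y \<le> a")
  case True
  then have "real (Suc k) * (y - a) \<le> 0" for k
    by (intro mult_nonneg_nonpos) auto
  then show ?thesis
    using True by (simp add: min_def max_def)
next
  case False
  obtain K :: nat where K: "1 / (y - a) \<le> real K"
    using real_arch_simple by blast
  have "1 \<le> real (Suc k) * (y - a)" if "K \<le> k" for k
  proof -
    have "1 \<le> real K * (y - a)"
      using K False by (simp add: divide_le_eq)
    also have "\<dots> \<le> real (Suc k) * (y - a)"
      using that False by (intro mult_right_mono) auto
    finally show ?thesis .
  qed
  then have "\<forall>\<^sub>F k in sequentially. max 0 (min 1 (1 - real (Suc k) * (y - a))) = 0"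
    unfolding eventually_sequentially by force
  then show ?thesis
    using False by (simp add: tendsto_eventually)
qed

section \<open>Averages of measures\<close>

lemma average_measure_eq_bind:
  assumes sets_nu: "sets nu = sets borel" and mu: "mu \<in> measurable nu (subprob_algebra borel)"
  shows "average_measure mu nu = nu \<bind> mu"
proof -
  have space_nu: "space nu = UNIV"
    using sets_eq_imp_space_eq[OF sets_nu] by simp
  have sets_bind: "sets (nu \<bind> mu) = sets borel"
    by (rule sets_bind[OF sets_kernel[OF mu]]) (simp_all add: space_nu)
  have "nu \<bind> mu = measure_of UNIV (sets borel) (emeasure (nu \<bind> mu))"
    using measure_of_of_measure[of "nu \<bind> mu"] sets_eq_imp_space_eq[OF sets_bind] by (simp add: sets_bind)
  also have "\<dots> = average_measure mu nu"
    unfolding average_measure_def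
  proof (rule measure_of_eq)
    fix X assume "X \<in> sigma_sets UNIV (sets (borel :: real measure))"
    then have "X \<in> sets borel"
      by (simp add: sets.sigma_sets_eq[of borel, simplified])
    then show "emeasure (nu \<bind> mu) X = (\<integral>\<^sup>+l. emeasure (mu l) X \<partial>nu)"
      using mu by (intro emeasure_bind) (auto simp: space_nu)
  qed auto
  finally show ?thesis
    by simp
qed

lemma poisson_transform_average_measure:
  assumes sets_nu: "sets nu = sets borel" and mu: "mu \<in> measurable nu (subprob_algebra borel)"
  shows "poisson_transform (average_measure mu nu) z = (\<integral>\<^sup>+l. poisson_transform (mu l) z \<partial>nu)"
  unfolding average_measure_eq_bind[OF assms] poisson_transform_eq_nn_integral_kernel
  using mu by (intro nn_integral_bind) measurable

lemma unif_hoelder_nonnegE: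
  assumes "unif_hoelder \<alpha> nu"
  obtains K where "0 \<le> K" "\<And>a b. a < b \<Longrightarrow> emeasure nu {a..b} \<le> ennreal (K * (b - a) powr \<alpha>)"
proof -
  obtain K where K: "\<And>a b. a < b \<Longrightarrow> emeasure nu {a..b} \<le> ennreal (K * (b - a) powr \<alpha>)"
    using assms unfolding unif_hoelder_def by blast
  have "emeasure nu {a..b} \<le> ennreal (max K 0 * (b - a) powr \<alpha>)" if "a < b" for a b
    using K[OF that] by (rule order_trans) (intro ennreal_leI mult_right_mono, auto)
  then show ?thesis
    using that[of "max K 0"] by simp
qed

lemma emeasure_compact_less_top:
  fixes M :: "real measure"
  assumes sets_M: "sets M = sets borel" and finite: "(\<integral>\<^sup>+x. ennreal (1 / (1 + x\<^sup>2)) \<partial>M) < \<infinity>"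
    and "compact C"
  shows "emeasure M C < \<infinity>"
proof -
  obtain r where r: "\<And>x. x \<in> C \<Longrightarrow> \<bar>x\<bar> \<le> r"
    using \<open>compact C\<close> compact_imp_bounded bounded_real by metis
  have "C \<in> sets M"
    using \<open>compact C\<close> sets_M by (simp add: borel_compact)
  then have "emeasure M C = (\<integral>\<^sup>+x. indicator C x \<partial>M)"
    by simp
  also have "\<dots> \<le> (\<integral>\<^sup>+x. ennreal (1 + r\<^sup>2) * ennreal (1 / (1 + x\<^sup>2)) \<partial>M)"
  proof (intro nn_integral_mono)
    fix x
    show "indicator C x \<le> ennreal (1 + r\<^sup>2) * ennreal (1 / (1 + x\<^sup>2))"
    proof (cases "x \<in> C")
      case True
      then have "\<bar>x\<bar> \<le> \<bar>r\<bar>"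
        using r by fastforce
      then have "x\<^sup>2 \<le> r\<^sup>2"
        by (simp add: abs_le_square_iff)
      then have "ennreal 1 \<le> ennreal ((1 + r\<^sup>2) * (1 / (1 + x\<^sup>2)))"
        by (intro ennreal_leI) (simp add: field_simps add_pos_nonneg)
      also have "\<dots> = ennreal (1 + r\<^sup>2) * ennreal (1 / (1 + x\<^sup>2))"
        by (intro ennreal_mult) auto
      finally show ?thesis
        using True by (simp only: indicator_simps ennreal_1)
    qed simp
  qed
  also have "\<dots> = ennreal (1 + r\<^sup>2) * (\<integral>\<^sup>+x. ennreal (1 / (1 + x\<^sup>2)) \<partial>M)"
    by (intro nn_integral_cmult, subst measurable_cong_sets[OF sets_M refl]) measurable
  also have "\<dots> < \<infinity>"
    using finite by (simp add: ennreal_mult_less_top)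
  finally show ?thesis .
qed

section \<open>Rank-one perturbations\<close>

lemma rank_one_pert_0 [simp]: "rank_one_pert T v 0 = T"
  by (simp add: rank_one_pert_def fun_eq_iff)

locale rank_one_perturbation =
  fixes A :: "'a::real_inner \<Rightarrow> 'a" and \<phi> :: 'a and mu :: "real \<Rightarrow> real measure" and B :: real
  assumes linear_A: "linear A"
    and norm_A_le: "\<And>x. norm (A x) \<le> B * norm x"
    and norm_phi: "norm \<phi> = 1"
    and spectral_measure_mu: "\<And>l. spectral_measure (rank_one_pert A \<phi> l) \<phi> (mu l)"
begin

lemma B_nonneg: "0 \<le> B"
  using order_trans[OF norm_ge_zero norm_A_le[of \<phi>]] norm_phi by simp

definition moment :: "real \<Rightarrow> nat \<Rightarrow> real" where
  "moment l n = inner \<phi> ((rank_one_pert A \<phi> l ^^ n) \<phi>)"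

lemma moment_0: "moment l 0 = 1"
  using norm_phi by (simp add: moment_def dot_square_norm)

lemma rank_one_pert_power_apply:
  "(rank_one_pert A \<phi> l ^^ n) \<phi> = (A ^^ n) \<phi> + (\<Sum>k<n. (l * moment l k) *\<^sub>R (A ^^ (n - 1 - k)) \<phi>)"
proof (induction n)
  case 0
  then show ?case by simp
next
  case (Suc n)
  have shift: "A ((A ^^ (n - 1 - k)) \<phi>) = (A ^^ (n - k)) \<phi>" if "k < n" for k
  proof -
    from that have "n - k = Suc (n - 1 - k)"
      by simp
    then show ?thesis
      by simp
  qed
  have "(rank_one_pert A \<phi> l ^^ Suc n) \<phi> = A ((rank_one_pert A \<phi> l ^^ n) \<phi>) + (l * moment l n) *\<^sub>R \<phi>"
    by (simp add: rank_one_pert_def moment_def)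
  also have "A ((rank_one_pert A \<phi> l ^^ n) \<phi>) = (A ^^ Suc n) \<phi> + (\<Sum>k<n. (l * moment l k) *\<^sub>R (A ^^ (n - k)) \<phi>)"
    using linear_A shift
    by (simp add: Suc.IH real_vector.linear_add real_vector.linear_sum real_vector.linear_scale)
  finally show ?case
    by (simp add: add.assoc)
qed

lemma moment_recursion:
  "moment l n = moment 0 n + l * (\<Sum>k<n. moment l k * moment 0 (n - 1 - k))"
proof -
  have "moment l n = inner \<phi> ((A ^^ n) \<phi>) + (\<Sum>k<n. (l * moment l k) * inner \<phi> ((A ^^ (n - 1 - k)) \<phi>))"
    unfolding moment_def[of l n] rank_one_pert_power_apply by (simp add: inner_sum_right inner_add_right)
  then show ?thesis
    by (simp add: moment_def sum_distrib_left mult.assoc)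
qed

lemma norm_rank_one_pert_le: "norm (rank_one_pert A \<phi> l x) \<le> (B + \<bar>l\<bar>) * norm x"
proof -
  have "norm (rank_one_pert A \<phi> l x) \<le> norm (A x) + \<bar>l\<bar> * \<bar>inner \<phi> x\<bar> * norm \<phi>"
    unfolding rank_one_pert_def by (metis abs_mult norm_scaleR norm_triangle_ineq)
  also have "\<dots> \<le> B * norm x + \<bar>l\<bar> * norm x"
    using norm_A_le[of x] Cauchy_Schwarz_ineq2[of \<phi> x] norm_phi
    by (intro add_mono) (auto intro!: mult_left_mono)
  finally show ?thesis
    by (simp add: algebra_simps)
qed

lemma abs_moment_le: "\<bar>moment l n\<bar> \<le> (B + \<bar>l\<bar>) ^ n"
proof -
  have "norm ((rank_one_pert A \<phi> l ^^ n) \<phi>) \<le> (B + \<bar>l\<bar>) ^ n"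
  proof (induction n)
    case (Suc n)
    have "norm ((rank_one_pert A \<phi> l ^^ Suc n) \<phi>) \<le> (B + \<bar>l\<bar>) * norm ((rank_one_pert A \<phi> l ^^ n) \<phi>)"
      using norm_rank_one_pert_le by simp
    also have "\<dots> \<le> (B + \<bar>l\<bar>) * (B + \<bar>l\<bar>) ^ n"
      using Suc.IH B_nonneg by (intro mult_left_mono) auto
    finally show ?case
      by simp
  qed (simp add: norm_phi)
  then show ?thesis
    using Cauchy_Schwarz_ineq2[of \<phi> "(rank_one_pert A \<phi> l ^^ n) \<phi>"] norm_phi
    unfolding moment_def by simp
qed

lemma continuous_on_moment: "continuous_on UNIV (\<lambda>l. moment l n)"
proof (induction n rule: less_induct)
  case (less n)
  then show ?case
    by (subst moment_recursion) (auto intro!: continuous_intros)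
qed

lemma integrable_power: "integrable (mu l) (\<lambda>x. x ^ n)"
  using spectral_measure_mu[of l] by (simp add: spectral_measure_def)

lemma integral_power: "(\<integral>x. x ^ n \<partial>mu l) = moment l n"
  using spectral_measure_mu[of l] by (simp add: spectral_measure_def moment_def)

lemma real_distribution_mu: "real_distribution (mu l)"
proof -
  have "finite_measure (mu l)" and sets: "sets (mu l) = sets borel"
    using spectral_measure_mu[of l] by (auto simp: spectral_measure_def)
  moreover have "measure (mu l) (space (mu l)) = 1"
    using integral_power[of l 0] moment_0[of l] by simp
  ultimately show ?thesis
    unfolding real_distribution_def real_distribution_axioms_def
    by (auto intro!: prob_spaceI simp: finite_measure.emeasure_eq_measure sets_eq_imp_space_eq[OF sets])
qed

text \<open>The support lies in \<open>[-(B + \<bar>l\<bar>), B + \<bar>l\<bar>]\<close>; the slack 1 is what the strict inequality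
  in the moment criterion requires.\<close>
lemma AE_abs_le: "AE y in mu l. \<bar>y\<bar> \<le> B + \<bar>l\<bar> + 1"
proof (rule finite_borel_measure.AE_abs_le_of_even_moments_le)
  show "finite_borel_measure (mu l)"
    using real_distribution_mu by (rule real_distribution.finite_borel_measure_M)
  show "(\<integral>y. y ^ (2 * n) \<partial>mu l) \<le> (B + \<bar>l\<bar>) ^ (2 * n)" for n
    using abs_moment_le[of l "2 * n"] by (simp add: integral_power)
qed (use B_nonneg integrable_power in auto)

subsection \<open>The Aronszajn-Krein formula\<close>

lemma borel_transform_moment_sums:
  assumes z: "B + \<bar>l\<bar> + 1 < cmod z"
  shows "(\<lambda>n. of_real (moment l n) / z ^ Suc n) sums (- borel_transform (mu l) z)"
proof -
  interpret real_distribution "mu l"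
    by (rule real_distribution_mu)
  define R where "R = B + \<bar>l\<bar> + 1"
  have R: "0 \<le> R" "R < cmod z"
    using B_nonneg z by (auto simp: R_def)
  have support: "AE y in mu l. \<bar>y\<bar> \<le> R"
    using AE_abs_le[of l] by (simp add: R_def)
  define s where "s N y = (\<Sum>n<N. of_real y ^ n / z ^ Suc n)" for N y
  have "(\<lambda>N. integral\<^sup>L (mu l) (s N)) \<longlonglongrightarrow> (\<integral>y. 1 / (z - of_real y) \<partial>mu l)"
  proof (rule integral_dominated_convergence[where w = "\<lambda>_. 1 / (cmod z - R)"])
    show "AE y in mu l. (\<lambda>N. s N y) \<longlonglongrightarrow> 1 / (z - of_real y)"
      using support unfolding s_def sums_def[symmetric]
      by eventually_elim (rule cauchy_kernel_geometric_sums, use R in linarith)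
    show "AE y in mu l. norm (s N y) \<le> 1 / (cmod z - R)" for N
      using support unfolding s_def
      by eventually_elim (rule norm_cauchy_kernel_geometric_partial_sum_le, use R in auto)
    show "s N \<in> borel_measurable (mu l)" for N
      using R unfolding s_def
      by (intro measurable_finite_borel borel_measurable_continuous_onI continuous_intros) auto
  qed measurable
  moreover have "integral\<^sup>L (mu l) (s N) = (\<Sum>n<N. of_real (moment l n) / z ^ Suc n)" for N
  proof -
    have "integral\<^sup>L (mu l) (s N) = (\<Sum>n<N. \<integral>y. of_real (y ^ n) / z ^ Suc n \<partial>mu l)"
      unfolding s_def
      by (subst Bochner_Integration.integral_sum)
        (auto simp del: of_real_power simp add: of_real_power[symmetric]
          intro!: integrable_divide integrable_of_real integrable_power)
    then show ?thesis
      by (simp del: of_real_power add: integral_power)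
  qed
  moreover have "(\<integral>y. 1 / (z - of_real y) \<partial>mu l) = - borel_transform (mu l) z"
  proof -
    have "1 / (z - of_real y) = - (1 / (of_real y - z))" for y
      by (metis minus_diff_eq divide_minus_right)
    then show ?thesis
      unfolding borel_transform_def by simp
  qed
  ultimately show ?thesis
    by (simp add: sums_def)
qed

lemma summable_norm_moment_series:
  assumes z: "B + \<bar>l\<bar> < cmod z"
  shows "summable (\<lambda>n. norm (of_real (moment l n) / z ^ Suc n))"
proof (rule summable_comparison_test)
  define q where "q = (B + \<bar>l\<bar>) / cmod z"
  have q: "0 \<le> q" "q < 1"
    using z B_nonneg by (auto simp: q_def divide_less_eq)
  show "summable (\<lambda>n. 1 / cmod z * q ^ n)"
    using q by (intro summable_mult summable_geometric) auto
  show "\<exists>N. \<forall>n\<ge>N. norm (norm (of_real (moment l n) / z ^ Suc n)) \<le> 1 / cmod z * q ^ n"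
  proof (intro exI allI impI)
    fix n
    have "\<bar>moment l n\<bar> / cmod z ^ Suc n \<le> (B + \<bar>l\<bar>) ^ n / cmod z ^ Suc n"
      by (intro divide_right_mono abs_moment_le) auto
    then show "norm (norm (of_real (moment l n) / z ^ Suc n)) \<le> 1 / cmod z * q ^ n"
      by (simp add: norm_divide norm_power norm_mult q_def power_divide)
  qed
qed

lemma aronszajn_krein_at_infinity:
  assumes z: "B + \<bar>l\<bar> + 1 < cmod z"
  shows "borel_transform (mu l) z * (1 + l * borel_transform (mu 0) z) = borel_transform (mu 0) z"
proof -
  define a b where "a n = of_real (moment l n) / z ^ Suc n"
    and "b n = of_real (moment 0 n) / z ^ Suc n" for n
  have z0: "B + \<bar>0\<bar> + 1 < cmod z"
    using z by simp
  have sums: "a sums (- borel_transform (mu l) z)" "b sums (- borel_transform (mu 0) z)"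
    unfolding a_def b_def using borel_transform_moment_sums[OF z] borel_transform_moment_sums[OF z0] .
  have zl: "B + \<bar>l\<bar> < cmod z" "B + \<bar>0\<bar> < cmod z"
    using z by auto
  have summable: "summable (\<lambda>n. norm (a n))" "summable (\<lambda>n. norm (b n))"
    using summable_norm_moment_series[OF zl(1)] summable_norm_moment_series[OF zl(2)]
    by (simp_all only: a_def b_def)
  have "a n = b n + of_real l * (\<Sum>k<n. a k * b (n - 1 - k))" for n
  proof -
    have "of_real l * (\<Sum>k<n. a k * b (n - 1 - k))
        = (\<Sum>k<n. of_real (l * (moment l k * moment 0 (n - 1 - k))) / z ^ Suc n)"
      unfolding sum_distrib_left
    proof (intro sum.cong refl)
      fix k assume "k \<in> {..<n}"
      then have "Suc n = Suc k + Suc (n - 1 - k)"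
        by simp
      then have split: "z ^ Suc n = z ^ Suc k * z ^ Suc (n - 1 - k)"
        by (metis power_add)
      show "of_real l * (a k * b (n - 1 - k))
          = of_real (l * (moment l k * moment 0 (n - 1 - k))) / z ^ Suc n"
        unfolding split a_def b_def by simp
    qed
    then show ?thesis
      unfolding a_def b_def
      by (subst moment_recursion) (simp add: add_divide_distrib sum_divide_distrib sum_distrib_left)
  qed
  then have "suminf a = suminf b + of_real l * (suminf a * suminf b)"
    using summable by (rule suminf_eq_of_convolution_recursion[rotated 2])
  then show ?thesis
    using sums by (simp add: sums_iff algebra_simps)
qed

lemma aronszajn_krein_mult:
  assumes z: "0 < Im z"
  shows "borel_transform (mu l) z * (1 + l * borel_transform (mu 0) z) = borel_transform (mu 0) z"
proof -
  define f where "f w = borel_transform (mu l) w * (1 + l * borel_transform (mu 0) w) - borel_transform (mu 0) w" for w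
  define R where "R = B + \<bar>l\<bar> + 1"
  define U where "U = {z. 0 < Im z} \<inter> - cball 0 R"
  have R: "0 < R"
    using B_nonneg by (simp add: R_def)
  have "f z = 0"
  proof (rule analytic_continuation[of f "{z. 0 < Im z}" U "\<i> * of_real (R + 1)"])
    show "f holomorphic_on {z. 0 < Im z}"
      unfolding f_def
      using real_distribution.finite_borel_measure_M[OF real_distribution_mu]
      by (intro holomorphic_intros finite_borel_measure.holomorphic_on_borel_transform)
    show "open {z. 0 < Im z}"
      by (rule open_halfspace_Im_gt)
    show "connected {z. 0 < Im z}"
      by (intro convex_connected convex_halfspace_Im_gt)
    have "open U"
      unfolding U_def by (intro open_Int open_halfspace_Im_gt open_Compl closed_cball)
    moreover have "\<i> * of_real (R + 1) \<in> U"
      using R by (simp add: U_def norm_mult)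
    ultimately show "\<i> * of_real (R + 1) islimpt U"
      by (intro interior_limit_point) (auto simp: interior_open)
    show "f w = 0" if "w \<in> U" for w
      using that aronszajn_krein_at_infinity[of l w] by (simp add: U_def R_def f_def)
    show "U \<subseteq> {z. 0 < Im z}"
      by (auto simp: U_def)
    show "\<i> * of_real (R + 1) \<in> {z. 0 < Im z}"
      using R by simp
    show "z \<in> {z. 0 < Im z}"
      using z by simp
  qed
  then show ?thesis
    by (simp add: f_def)
qed

lemma borel_transform_perturbed:
  assumes z: "0 < Im z"
  shows "borel_transform (mu l) z = borel_transform (mu 0) z / (1 + l * borel_transform (mu 0) z)"
proof -
  have "0 < Im (borel_transform (mu 0) z)"
    using z by (rule real_distribution.Im_borel_transform_pos[OF real_distribution_mu])
  then have "1 + l * borel_transform (mu 0) z \<noteq> 0"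
  proof (cases "l = 0")
    case False
    have "Im (1 + l * borel_transform (mu 0) z) = l * Im (borel_transform (mu 0) z)"
      by simp
    with False \<open>0 < Im (borel_transform (mu 0) z)\<close> show ?thesis
      by force
  qed simp
  then show ?thesis
    using aronszajn_krein_mult[OF z, of l] by (simp add: eq_divide_eq)
qed

lemma poisson_transform_perturbed:
  assumes z: "0 < Im z"
  defines "F \<equiv> borel_transform (mu 0) z"
  shows "poisson_transform (mu l) z = ennreal (poisson_kernel (Im F / (cmod F)\<^sup>2) (- Re F / (cmod F)\<^sup>2) l)"
proof -
  have "0 < Im F"
    unfolding F_def using z by (rule real_distribution.Im_borel_transform_pos[OF real_distribution_mu])
  moreover have "poisson_transform (mu l) z = ennreal (Im (borel_transform (mu l) z))"
    using real_distribution.finite_borel_measure_M[OF real_distribution_mu] z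
    by (rule finite_borel_measure.poisson_transform_eq_Im_borel_transform)
  ultimately show ?thesis
    using borel_transform_perturbed[OF z, of l] by (simp add: F_def Im_divide_one_plus_mult)
qed

subsection \<open>Measurability in the coupling constant\<close>

lemma continuous_on_integral_polynomial:
  assumes "real_polynomial_function p"
  shows "continuous_on UNIV (\<lambda>l. \<integral>y. p y \<partial>mu l)"
proof -
  obtain a n where p: "p = (\<lambda>x. \<Sum>i\<le>n. a i * x ^ i)"
    using assms real_polynomial_function_iff_sum by blast
  have "(\<integral>y. p y \<partial>mu l) = (\<Sum>i\<le>n. a i * moment l i)" for l
    unfolding p by (subst Bochner_Integration.integral_sum) (auto intro: integrable_power simp: integral_power)
  then show ?thesis
    by (simp add: continuous_on_moment continuous_intros)
qed

text \<open>The \<open>j\<close>-th polynomial approximates \<open>f\<close> on \<open>[-(B + j + 1), B + j + 1]\<close>, which carries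
  every \<open>\<mu>\<^sub>l\<close> with \<open>\<bar>l\<bar> \<le> j\<close>.\<close>
lemma borel_measurable_integral_continuous:
  fixes f :: "real \<Rightarrow> real"
  assumes f: "continuous_on UNIV f" and bounded: "\<And>y. \<bar>f y\<bar> \<le> c"
  shows "(\<lambda>l. \<integral>y. f y \<partial>mu l) \<in> borel_measurable borel"
proof -
  obtain P where P: "\<And>j. real_polynomial_function (P j)"
    and approx: "\<And>j x. \<bar>x\<bar> \<le> B + real j + 1 \<Longrightarrow> \<bar>f x - P j x\<bar> < 1 / real (Suc j)"
    using polynomial_approximations[OF f, of "\<lambda>j. B + real j + 1"] by blast
  have [measurable]: "f \<in> borel_measurable borel" "P j \<in> borel_measurable borel" for j
    using f P[of j] by (auto intro!: borel_measurable_continuous_onI continuous_on_polymonial_function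
        simp: real_polynomial_function_eq)
  show ?thesis
  proof (rule borel_measurable_LIMSEQ_real)
    show "(\<lambda>l. \<integral>y. P j y \<partial>mu l) \<in> borel_measurable borel" for j
      using continuous_on_integral_polynomial[OF P] by (rule borel_measurable_continuous_onI)
    fix l
    interpret real_distribution "mu l"
      by (rule real_distribution_mu)
    obtain N :: nat where N: "\<bar>l\<bar> \<le> real N"
      using real_arch_simple by blast
    show "(\<lambda>j. \<integral>y. P j y \<partial>mu l) \<longlonglongrightarrow> (\<integral>y. f y \<partial>mu l)"
    proof (rule integral_tendsto_of_AE_uniform)
      show "integrable (mu l) (P j)" for j
        using P[of j] real_polynomial_function_iff_sum[of "P j"]
        by (auto intro!: Bochner_Integration.integrable_sum integrable_power)
      show "integrable (mu l) f"
        using bounded by (intro integrable_const_bound[where B = c]) auto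
      show "\<forall>\<^sub>F j in sequentially. AE y in mu l. norm (P j y - f y) \<le> 1 / real (Suc j)"
        unfolding eventually_sequentially
      proof (intro exI allI impI)
        fix j assume "N \<le> j"
        show "AE y in mu l. norm (P j y - f y) \<le> 1 / real (Suc j)"
          using AE_abs_le[of l]
        proof eventually_elim
          case (elim y)
          then have "\<bar>y\<bar> \<le> B + real j + 1"
            using N \<open>N \<le> j\<close> by linarith
          then show ?case
            using approx[of y j] by simp
        qed
      qed
      show "(\<lambda>j. 1 / real (Suc j)) \<longlonglongrightarrow> 0"
        using LIMSEQ_Suc[OF lim_1_over_n] by simp
    qed
  qed
qed

lemma borel_measurable_cdf: "(\<lambda>l. cdf (mu l) a) \<in> borel_measurable borel"
proof (rule borel_measurable_LIMSEQ_real)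
  define f where "f k y = max 0 (min 1 (1 - real (Suc k) * (y - a)))" for k y
  have f: "continuous_on UNIV (f k)" for k
    unfolding f_def by (intro continuous_intros)
  show "(\<lambda>l. \<integral>y. f k y \<partial>mu l) \<in> borel_measurable borel" for k
    by (rule borel_measurable_integral_continuous[OF f, where c = 1]) (auto simp: f_def)
  fix l
  interpret real_distribution "mu l"
    by (rule real_distribution_mu)
  have "(\<lambda>k. \<integral>y. f k y \<partial>mu l) \<longlonglongrightarrow> (\<integral>y. indicator {..a} y \<partial>mu l)"
  proof (rule integral_dominated_convergence[where w = "\<lambda>_. 1"])
    show "f k \<in> borel_measurable (mu l)" for k
      using borel_measurable_continuous_onI[OF f] by simp
    show "AE y in mu l. norm (f k y) \<le> 1" for k
      by (auto simp: f_def)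
    show "AE y in mu l. (\<lambda>k. f k y) \<longlonglongrightarrow> indicator {..a} y"
      unfolding f_def by (intro AE_I2 ramp_tendsto_indicator_atMost)
  qed auto
  then show "(\<lambda>k. \<integral>y. f k y \<partial>mu l) \<longlonglongrightarrow> cdf (mu l) a"
    by (simp add: cdf_def)
qed

lemma emeasure_mu_atMost: "emeasure (mu l) {..a} = ennreal (cdf (mu l) a)"
proof -
  interpret real_distribution "mu l"
    by (rule real_distribution_mu)
  show ?thesis
    by (simp add: cdf_def emeasure_eq_measure)
qed

lemma emeasure_mu_UNIV: "emeasure (mu l) UNIV = 1"
proof -
  interpret real_distribution "mu l"
    by (rule real_distribution_mu)
  show ?thesis
    using emeasure_space_1 by simp
qed

lemma measurable_mu: "mu \<in> measurable borel (subprob_algebra borel)"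
proof (rule measurable_subprob_algebra_generated[where \<Omega> = UNIV and G = "range atMost"])
  show "sets (borel :: real measure) = sigma_sets UNIV (range atMost)"
    by (simp add: borel_eq_atMost)
  show "Int_stable (range atMost :: real set set)"
    by (auto simp: Int_stable_def)
  show "subprob_space (mu l)" "sets (mu l) = sets borel" for l
    using real_distribution_mu[of l]
    by (auto simp: real_distribution_def real_distribution_axioms_def prob_space_imp_subprob_space)
  show "(\<lambda>l. emeasure (mu l) A) \<in> borel_measurable borel" if A: "A \<in> range atMost" for A
  proof -
    obtain a where "A = {..a}"
      using A by blast
    then have "(\<lambda>l. emeasure (mu l) A) = (\<lambda>l. ennreal (cdf (mu l) a))"
      by (simp add: emeasure_mu_atMost)
    then show ?thesis
      using borel_measurable_cdf by simp
  qed
qed (auto simp: emeasure_mu_UNIV)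

lemma poisson_transform_average_measure_le:
  assumes sets_nu: "sets nu = sets borel" and K: "0 \<le> K" and \<alpha>: "\<alpha> \<le> 1"
    and hoelder: "\<And>a b. a < b \<Longrightarrow> emeasure nu {a..b} \<le> ennreal (K * (b - a) powr \<alpha>)"
    and z: "0 < Im z"
  shows "poisson_transform (average_measure mu nu) z
    \<le> ennreal (16 * K * ((cmod (borel_transform (mu 0) z))\<^sup>2
        / enn2real (poisson_transform (mu 0) z)) powr (1 - \<alpha>))"
proof -
  define F where "F = borel_transform (mu 0) z"
  define h where "h = Im F / (cmod F)\<^sup>2"
  have F: "0 < Im F"
    unfolding F_def using z by (rule real_distribution.Im_borel_transform_pos[OF real_distribution_mu])
  then have "F \<noteq> 0"
    by auto
  with F have h: "0 < h"
    by (simp add: h_def)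
  have "mu \<in> measurable nu (subprob_algebra borel)"
    using measurable_mu by (simp add: measurable_cong_sets[OF sets_nu refl])
  then have "poisson_transform (average_measure mu nu) z
      = (\<integral>\<^sup>+l. ennreal (poisson_kernel h (- Re F / (cmod F)\<^sup>2) l) \<partial>nu)"
    using sets_nu by (simp add: poisson_transform_average_measure poisson_transform_perturbed[OF z] F_def h_def)
  also have "\<dots> \<le> ennreal (16 * K * h powr (\<alpha> - 1))"
    by (rule nn_integral_poisson_kernel_le_hoelder[OF sets_nu K \<alpha> hoelder h])
  also have "h powr (\<alpha> - 1) = ((cmod F)\<^sup>2 / Im F) powr (1 - \<alpha>)"
  proof -
    have "(cmod F)\<^sup>2 / Im F = 1 / h"
      by (simp add: h_def)
    then have "((cmod F)\<^sup>2 / Im F) powr (1 - \<alpha>) = 1 / h powr (1 - \<alpha>)"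
      using h by (simp add: powr_divide)
    then show ?thesis
      using powr_minus_divide[of h "1 - \<alpha>"] by simp
  qed
  also have "Im F = enn2real (poisson_transform (mu 0) z)"
    using z F real_distribution.finite_borel_measure_M[OF real_distribution_mu]
    by (simp add: finite_borel_measure.poisson_transform_eq_Im_borel_transform F_def)
  finally show ?thesis
    by (simp add: F_def mult.assoc)
qed

end

theorem mainTheorem5:
  fixes A :: "'a::{real_inner, complete_space} \<Rightarrow> 'a"
    and \<phi> :: 'a
    and mu :: "real \<Rightarrow> real measure"
    and nu :: "real measure"
    and \<alpha> :: real
  assumes sep: "separable_space (euclidean :: 'a topology)"
    and A: "bounded_selfadjoint A"
    and phi: "norm \<phi> = 1"
    and mu: "\<And>l. spectral_measure (rank_one_pert A \<phi> l) \<phi> (mu l)"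
    and alpha: "0 \<le> \<alpha>" "\<alpha> \<le> 1"
    and nu_borel: "sets nu = sets borel"
    and nu_sigma: "sigma_finite_measure nu"
    and nu_hoelder: "unif_hoelder \<alpha> nu"
  shows "(\<exists>C::real. \<forall>z::complex. Im z > 0 \<longrightarrow>
            poisson_transform (average_measure mu nu) z
              \<le> ennreal (C * ((cmod (borel_transform (mu 0) z))\<^sup>2
                               / enn2real (poisson_transform (mu 0) z)) powr (1 - \<alpha>)))
       \<and> (\<integral>\<^sup>+x. ennreal (1 / (1 + x\<^sup>2)) \<partial>(average_measure mu nu)) < \<infinity>
       \<and> (\<forall>K. compact K \<longrightarrow> emeasure (average_measure mu nu) K < \<infinity>)"
proof -
  have "bounded_linear A"
    using A by (simp add: bounded_selfadjoint_def)
  then obtain B where "\<And>x. norm (A x) \<le> norm x * B"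
    using bounded_linear.pos_bounded by blast
  then interpret rank_one_perturbation A \<phi> mu B
    using \<open>bounded_linear A\<close> phi mu
    by (intro rank_one_perturbation.intro bounded_linear.linear) (auto simp: mult.commute)
  obtain K where K: "0 \<le> K" "\<And>a b. a < b \<Longrightarrow> emeasure nu {a..b} \<le> ennreal (K * (b - a) powr \<alpha>)"
    using unif_hoelder_nonnegE[OF nu_hoelder] by blast
  note bound = poisson_transform_average_measure_le[OF nu_borel K(1) alpha(2) K(2)]
  have "(\<integral>\<^sup>+x. ennreal (1 / (1 + x\<^sup>2)) \<partial>average_measure mu nu) = poisson_transform (average_measure mu nu) \<i>"
    by (simp add: poisson_transform_def add.commute)
  also have "\<dots> < \<infinity>"
    using bound[of \<i>] by (simp add: le_less_trans)
  finally have cauchy: "(\<integral>\<^sup>+x. ennreal (1 / (1 + x\<^sup>2)) \<partial>average_measure mu nu) < \<infinity>" .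
  have "sets (average_measure mu nu) = sets borel"
    by (simp add: average_measure_def sets.sigma_sets_eq[of borel, simplified])
  then show ?thesis
    using bound cauchy emeasure_compact_less_top by blast
qed

end
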